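(* Let $\sigma_0\ge\sigma_1\ge\dots\ge\sigma_{r-1}>0$ with $\sum_{i=0}^{r-1}\sigma_i^2=1$ and $r\le\min(N_1-1,N_2-1)$. Then $$\sigma_0\sigma_1\,\mathbb{I}_{N_1N_2}+\sum_{i=0}^{r-1}\sum_{j=0}^{r-1}\sigma_i\sigma_j\,|i\rangle\langle j|\otimes|i\rangle\langle j|\in\mathrm{SEP}_{N_1\otimes N_2}.$$
   Context: $\mathrm{SEP}_{N_1\otimes N_2}$ is the cone of separable matrices on $\mathbb{C}^{N_1}\otimes\mathbb{C}^{N_2}$, i.e. matrices of the form $\sum_i\lambda_i|x_i\rangle\langle x_i|\otimes|y_i\rangle\langle y_i|$ with $\lambda_i\ge0$. $\{|i\rangle\}$ is the computational basis. *)

theory Defs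
  imports Complex_Main
begin

text \<open>Matrices on C^N1 (x) C^N2 are represented as functions of index pairs:
  A (a,b) (c,d) is the entry in row |a>|b>, column |c>|d>, meaningful for
  a,c < N1 and b,d < N2. Vectors of C^N are functions nat => complex,
  meaningful on indices < N.\<close>

type_synonym bimat = "(nat \<times> nat) \<Rightarrow> (nat \<times> nat) \<Rightarrow> complex"

definition ketbra :: "nat \<Rightarrow> nat \<Rightarrow> nat \<Rightarrow> nat \<Rightarrow> complex" where
  "ketbra i j a c = (if a = i \<and> c = j then 1 else 0)"

definition proj :: "(nat \<Rightarrow> complex) \<Rightarrow> nat \<Rightarrow> nat \<Rightarrow> complex" where
  "proj x a c = x a * cnj (x c)"

definition tensor :: "(nat \<Rightarrow> nat \<Rightarrow> complex) \<Rightarrow> (nat \<Rightarrow> nat \<Rightarrow> complex) \<Rightarrow> bimat" where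
  "tensor A B = (\<lambda>(a,b) (c,d). A a c * B b d)"

definition idm :: bimat where
  "idm = (\<lambda>p q. if p = q then 1 else 0)"

definition eq_on :: "nat \<Rightarrow> nat \<Rightarrow> bimat \<Rightarrow> bimat \<Rightarrow> bool" where
  "eq_on N1 N2 A B = (\<forall>a b c d. a < N1 \<longrightarrow> b < N2 \<longrightarrow> c < N1 \<longrightarrow> d < N2 \<longrightarrow>
      A (a,b) (c,d) = B (a,b) (c,d))"

definition SEP :: "nat \<Rightarrow> nat \<Rightarrow> bimat set" where
  "SEP N1 N2 = {A. \<exists>(m::nat) (lam::nat \<Rightarrow> real) (x::nat \<Rightarrow> nat \<Rightarrow> complex) (y::nat \<Rightarrow> nat \<Rightarrow> complex).
      (\<forall>k<m. lam k \<ge> 0) \<and>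
      eq_on N1 N2 A (\<lambda>p q. \<Sum>k<m. complex_of_real (lam k) * tensor (proj (x k)) (proj (y k)) p q)}"

end

theory Submission
  imports Defs
begin

text \<open>Write the matrix as F + D. F is the average over s, u < m (m > 2 r^2) of the product
  states |x_su><x_su| (x) |y_su><y_su|, where x_su(a) = sqrt(\<sigma>_a) exp(2 \<pi> i (s a + u a^2) / m) and
  y_su is its complex conjugate. Averaging the phases kills the entry (ab, cd) unless
  a + d = b + c and a^2 + d^2 = b^2 + c^2, i.e. unless {a, d} = {b, c}; hence
  F = \<Sum> \<sigma>_i \<sigma>_j |ii><jj| + \<Sum>_(a \<noteq> b) \<sigma>_a \<sigma>_b |ab><ab|. The remainder D is diagonal with entries
  \<sigma>_0 \<sigma>_1 - \<sigma>_a \<sigma>_b \<ge> 0 (a \<noteq> b) and \<sigma>_0 \<sigma>_1, so it is a nonnegative combination of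
  product basis states.\<close>

lemma SEP_intro:
  fixes m :: nat and lam :: "nat \<Rightarrow> real"
  assumes "\<forall>k<m. lam k \<ge> 0"
    and "eq_on N1 N2 A (\<lambda>p q. \<Sum>k<m. complex_of_real (lam k) * tensor (proj (x k)) (proj (y k)) p q)"
  shows "A \<in> SEP N1 N2"
  using assms unfolding SEP_def by blast

lemma SEP_E:
  assumes "A \<in> SEP N1 N2"
  obtains m :: nat and lam :: "nat \<Rightarrow> real" and x y where "\<forall>k<m. lam k \<ge> 0"
    and "eq_on N1 N2 A (\<lambda>p q. \<Sum>k<m. complex_of_real (lam k) * tensor (proj (x k)) (proj (y k)) p q)"
  using assms unfolding SEP_def by blast

lemma SEP_sum_products:
  assumes "finite S" and "\<And>k. k \<in> S \<Longrightarrow> l k \<ge> 0"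
  shows "(\<lambda>p q. \<Sum>k\<in>S. complex_of_real (l k) * tensor (proj (x k)) (proj (y k)) p q) \<in> SEP N1 N2"
proof -
  obtain h where h: "bij_betw h {..<card S} S"
    using ex_bij_betw_nat_finite[OF assms(1)] by (auto simp: lessThan_atLeast0)
  have reindex: "(\<Sum>k\<in>S. f k) = (\<Sum>k<card S. f (h k))" for f :: "_ \<Rightarrow> complex"
    using sum.reindex_bij_betw[OF h] by metis
  show ?thesis
  proof (rule SEP_intro)
    show "\<forall>k<card S. l (h k) \<ge> 0"
      using h assms(2) by (auto simp: bij_betw_def)
    show "eq_on N1 N2 (\<lambda>p q. \<Sum>k\<in>S. complex_of_real (l k) * tensor (proj (x k)) (proj (y k)) p q)
        (\<lambda>p q. \<Sum>k<card S. complex_of_real (l (h k)) * tensor (proj (x (h k))) (proj (y (h k))) p q)"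
      unfolding eq_on_def reindex by simp
  qed
qed

lemma SEP_eq_on:
  assumes "eq_on N1 N2 A B" and "B \<in> SEP N1 N2"
  shows "A \<in> SEP N1 N2"
  using assms unfolding SEP_def eq_on_def by auto

lemma sum_lessThan_add:
  fixes m n :: nat
  shows "(\<Sum>k<m + n. f k) = (\<Sum>k<m. f k) + (\<Sum>k<n. f (m + k))"
  by (induction n) (simp_all add: add.assoc)

lemma SEP_add:
  assumes "A \<in> SEP N1 N2" and "B \<in> SEP N1 N2"
  shows "(\<lambda>p q. A p q + B p q) \<in> SEP N1 N2"
proof -
  obtain m1 :: nat and lam1 :: "nat \<Rightarrow> real" and x1 y1 where lam1: "\<forall>k<m1. lam1 k \<ge> 0" and
    A: "eq_on N1 N2 A (\<lambda>p q. \<Sum>k<m1. complex_of_real (lam1 k) * tensor (proj (x1 k)) (proj (y1 k)) p q)"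
    using assms(1) by (rule SEP_E)
  obtain m2 :: nat and lam2 :: "nat \<Rightarrow> real" and x2 y2 where lam2: "\<forall>k<m2. lam2 k \<ge> 0" and
    B: "eq_on N1 N2 B (\<lambda>p q. \<Sum>k<m2. complex_of_real (lam2 k) * tensor (proj (x2 k)) (proj (y2 k)) p q)"
    using assms(2) by (rule SEP_E)
  define lam where "lam k = (if k < m1 then lam1 k else lam2 (k - m1))" for k
  define x where "x k = (if k < m1 then x1 k else x2 (k - m1))" for k
  define y where "y k = (if k < m1 then y1 k else y2 (k - m1))" for k
  show ?thesis
  proof (rule SEP_intro)
    show "\<forall>k<m1 + m2. lam k \<ge> 0"
      using lam1 lam2 by (auto simp: lam_def)
    show "eq_on N1 N2 (\<lambda>p q. A p q + B p q)
        (\<lambda>p q. \<Sum>k<m1 + m2. complex_of_real (lam k) * tensor (proj (x k)) (proj (y k)) p q)"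
      using A B unfolding eq_on_def by (simp add: sum_lessThan_add lam_def x_def y_def)
  qed
qed

definition basis_vec :: "nat \<Rightarrow> nat \<Rightarrow> complex" where
  "basis_vec i a = (if a = i then 1 else 0)"

lemma SEP_diagonal:
  assumes "\<And>a b. c a b \<ge> 0"
  shows "(\<lambda>p q. if p = q then complex_of_real (c (fst p) (snd p)) else 0) \<in> SEP N1 N2"
proof (rule SEP_eq_on)
  let ?D = "\<lambda>p q. \<Sum>k\<in>{..<N1} \<times> {..<N2}. complex_of_real (c (fst k) (snd k))
      * tensor (proj (basis_vec (fst k))) (proj (basis_vec (snd k))) p q"
  show "?D \<in> SEP N1 N2"
    using assms by (intro SEP_sum_products) auto
  have summand: "complex_of_real (c (fst k) (snd k))
        * tensor (proj (basis_vec (fst k))) (proj (basis_vec (snd k))) p q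
      = (if k = p then (if p = q then complex_of_real (c (fst p) (snd p)) else 0) else 0)" for k p q
    by (cases k, cases p, cases q) (auto simp: tensor_def proj_def basis_vec_def)
  show "eq_on N1 N2 (\<lambda>p q. if p = q then complex_of_real (c (fst p) (snd p)) else 0) ?D"
    unfolding eq_on_def summand by simp
qed

lemma sum_cis_root_of_unity_powers:
  fixes k :: int and m :: nat
  assumes m: "m > 0" and k: "\<bar>k\<bar> < int m"
  shows "(\<Sum>s<m. cis (2 * pi * of_int k / real m) ^ s) = (if k = 0 then of_nat m else 0)"
proof (cases "k = 0")
  case True
  then show ?thesis by simp
next
  case False
  let ?z = "cis (2 * pi * of_int k / real m)"
  have "?z \<noteq> 1"
  proof
    assume "?z = 1"
    then have "cos (2 * pi * of_int k / real m) = 1"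
      by (metis cis.sel(1) one_complex.sel(1))
    then obtain n :: int where "2 * pi * of_int k / real m = of_int n * 2 * pi"
      using cos_one_2pi_int by blast
    then have "real_of_int k = of_int n * real m"
      using m by (simp add: field_simps)
    then have "k = n * int m"
      by (metis of_int_eq_iff of_int_mult of_int_of_nat_eq)
    moreover from this False have "\<bar>n\<bar> \<ge> 1"
      by auto
    ultimately have "\<bar>k\<bar> \<ge> int m"
      by (simp add: abs_mult mult_le_cancel_right1)
    with k show False
      by simp
  qed
  moreover have "?z ^ m = 1"
    using m by (simp add: DeMoivre)
  ultimately show ?thesis
    using False by (simp add: geometric_sum)
qed

lemma sum_and_sum_squares_eq_imp:
  fixes a b c d :: int
  assumes sum: "a + d = b + c" and squares: "a\<^sup>2 + d\<^sup>2 = b\<^sup>2 + c\<^sup>2"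
  shows "(a = b \<and> c = d) \<or> (a = c \<and> b = d)"
proof -
  from sum have diff: "a - b = c - d"
    by simp
  from squares have "(a - b) * (a + b) = (c - d) * (c + d)"
    by (simp add: algebra_simps power2_eq_square)
  with diff have "a = b \<or> a + b = c + d"
    by auto
  with diff show ?thesis
    by auto
qed

definition phase_vec :: "(nat \<Rightarrow> real) \<Rightarrow> nat \<Rightarrow> nat \<Rightarrow> nat \<Rightarrow> nat \<Rightarrow> complex" where
  "phase_vec w m s u a = complex_of_real (w a) * cis (2 * pi * (real s * real a + real u * (real a)\<^sup>2) / real m)"

lemma tensor_proj_phase_vec:
  "tensor (proj (phase_vec w m s u)) (proj (cnj \<circ> phase_vec w m s u)) (a, b) (c, d)
   = complex_of_real (w a * w b * w c * w d)
     * cis (2 * pi * of_int (int a + int d - int b - int c) / real m) ^ s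
     * cis (2 * pi * of_int (int a ^ 2 + int d ^ 2 - int b ^ 2 - int c ^ 2) / real m) ^ u"
proof -
  define \<theta> where "\<theta> x = 2 * pi * (real s * real x + real u * (real x)\<^sup>2) / real m" for x
  have vec: "phase_vec w m s u x = complex_of_real (w x) * cis (\<theta> x)" for x
    by (simp add: phase_vec_def \<theta>_def)
  have phase: "\<theta> a - \<theta> c - \<theta> b + \<theta> d
      = real s * (2 * pi * of_int (int a + int d - int b - int c) / real m)
        + real u * (2 * pi * of_int (int a ^ 2 + int d ^ 2 - int b ^ 2 - int c ^ 2) / real m)"
    unfolding \<theta>_def by (simp add: add_divide_distrib diff_divide_distrib algebra_simps)
  have "tensor (proj (phase_vec w m s u)) (proj (cnj \<circ> phase_vec w m s u)) (a, b) (c, d)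
      = complex_of_real (w a * w b * w c * w d)
        * (cis (\<theta> a) * cis (- \<theta> c) * cis (- \<theta> b) * cis (\<theta> d))"
    by (simp add: tensor_def proj_def vec cis_cnj mult_ac)
  also have "\<dots> = complex_of_real (w a * w b * w c * w d) * cis (\<theta> a - \<theta> c - \<theta> b + \<theta> d)"
    by (simp add: cis_mult)
  finally show ?thesis
    unfolding phase by (simp add: cis_mult DeMoivre mult.assoc)
qed

definition twirl :: "(nat \<Rightarrow> real) \<Rightarrow> nat \<Rightarrow> bimat" where
  "twirl w m = (\<lambda>p q. \<Sum>k\<in>{..<m} \<times> {..<m}. complex_of_real (1 / (real m)\<^sup>2)
     * tensor (proj (phase_vec w m (fst k) (snd k))) (proj (cnj \<circ> phase_vec w m (fst k) (snd k))) p q)"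

lemma twirl_entry:
  assumes supp: "\<And>a. r \<le> a \<Longrightarrow> w a = 0" and m: "2 * r\<^sup>2 < m"
  shows "twirl w m (a, b) (c, d)
    = (if (a = b \<and> c = d) \<or> (a = c \<and> b = d) then complex_of_real (w a * w b * w c * w d) else 0)"
proof -
  define k1 where "k1 = int a + int d - int b - int c"
  define k2 where "k2 = int a ^ 2 + int d ^ 2 - int b ^ 2 - int c ^ 2"
  define z1 where "z1 = cis (2 * pi * of_int k1 / real m)"
  define z2 where "z2 = cis (2 * pi * of_int k2 / real m)"
  have entry: "twirl w m (a, b) (c, d)
      = complex_of_real (1 / (real m)\<^sup>2) * complex_of_real (w a * w b * w c * w d)
        * ((\<Sum>s<m. z1 ^ s) * (\<Sum>u<m. z2 ^ u))"
    unfolding twirl_def tensor_proj_phase_vec sum.cartesian_product sum_product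
    by (simp add: z1_def z2_def k1_def k2_def sum_distrib_left split_beta mult_ac)
  show ?thesis
  proof (cases "a < r \<and> b < r \<and> c < r \<and> d < r")
    case True
    \<comment> \<open>\<open>m > 2 r\<^sup>2\<close> bounds \<open>|k1|, |k2|\<close> by \<open>m\<close>, so each character sum vanishes unless its exponent is 0\<close>
    have sq: "int x ^ 2 < int r ^ 2" if "x < r" for x
      using that by (simp add: power_strict_mono)
    have "int r \<le> int r ^ 2"
      by (metis of_nat_le_iff of_nat_power le_square power2_eq_square)
    moreover have "2 * int r ^ 2 < int m"
      using m by (metis of_nat_less_iff of_nat_mult of_nat_numeral of_nat_power)
    ultimately have "\<bar>k1\<bar> < int m" "\<bar>k2\<bar> < int m"
      unfolding k1_def k2_def abs_less_iff
      using True sq[of a] sq[of b] sq[of c] sq[of d] zero_le_power2[of "int a"]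
        zero_le_power2[of "int b"] zero_le_power2[of "int c"] zero_le_power2[of "int d"]
      by linarith+
    then have "(\<Sum>s<m. z1 ^ s) * (\<Sum>u<m. z2 ^ u) = (if k1 = 0 \<and> k2 = 0 then of_nat m * of_nat m else 0)"
      unfolding z1_def z2_def using m by (simp add: sum_cis_root_of_unity_powers)
    also have "k1 = 0 \<and> k2 = 0 \<longleftrightarrow> (a = b \<and> c = d) \<or> (a = c \<and> b = d)"
    proof -
      have "k1 = 0 \<longleftrightarrow> int a + int d = int b + int c"
        and "k2 = 0 \<longleftrightarrow> int a ^ 2 + int d ^ 2 = int b ^ 2 + int c ^ 2"
        unfolding k1_def k2_def by linarith+
      then show ?thesis
        using sum_and_sum_squares_eq_imp[of "int a" "int d" "int b" "int c"] by auto
    qed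
    finally have sums: "(\<Sum>s<m. z1 ^ s) * (\<Sum>u<m. z2 ^ u)
        = (if (a = b \<and> c = d) \<or> (a = c \<and> b = d) then of_nat m * of_nat m else 0)" .
    have "complex_of_real (1 / (real m)\<^sup>2) * complex_of_real (w a * w b * w c * w d)
        * (of_nat m * of_nat m) = complex_of_real (w a * w b * w c * w d)"
      using m by (simp add: field_simps power2_eq_square)
    then show ?thesis
      unfolding entry sums by simp
  next
    case False
    then have weight: "w a * w b * w c * w d = 0"
      using supp[of a] supp[of b] supp[of c] supp[of d] by (auto simp: not_less)
    show ?thesis
      unfolding entry weight by simp
  qed
qed

lemma twirl_in_SEP: "twirl w m \<in> SEP N1 N2"
  unfolding twirl_def by (rule SEP_sum_products) auto

lemma twirl_sqrt_entry:
  fixes \<sigma> :: "nat \<Rightarrow> real"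
  assumes nonneg: "\<And>a. \<sigma> a \<ge> 0" and supp: "\<And>a. r \<le> a \<Longrightarrow> \<sigma> a = 0" and m: "2 * r\<^sup>2 < m"
  shows "twirl (\<lambda>a. sqrt (\<sigma> a)) m (a, b) (c, d)
    = (if a = b \<and> c = d then complex_of_real (\<sigma> a * \<sigma> c)
       else if a = c \<and> b = d then complex_of_real (\<sigma> a * \<sigma> b) else 0)"
proof -
  have "sqrt (\<sigma> x) * sqrt (\<sigma> x) = \<sigma> x" for x
    using nonneg by simp
  then show ?thesis
    using twirl_entry[of r "\<lambda>a. sqrt (\<sigma> a)" m a b c d] supp m by (auto simp: mult_ac)
qed

lemma sum_ketbra_tensor_entry:
  "(\<Sum>i<r. \<Sum>j<r. complex_of_real (\<sigma> i * \<sigma> j) * tensor (ketbra i j) (ketbra i j) (a, b) (c, d))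
   = (if a = b \<and> c = d \<and> a < r \<and> c < r then complex_of_real (\<sigma> a * \<sigma> c) else 0)"
proof -
  let ?entry = "if a = b \<and> c = d then complex_of_real (\<sigma> a * \<sigma> c) else 0"
  have summand: "complex_of_real (\<sigma> i * \<sigma> j) * tensor (ketbra i j) (ketbra i j) (a, b) (c, d)
      = (if j = c then if i = a then ?entry else 0 else 0)" for i j
    unfolding tensor_def ketbra_def by auto
  have inner: "(\<Sum>j<r. if j = c then if i = a then ?entry else 0 else 0)
      = (if i = a then if c < r then ?entry else 0 else 0)" for i
    by (subst sum.delta) auto
  show ?thesis
    unfolding summand inner by (subst sum.delta) auto
qed

lemma prod_le_two_largest:
  fixes \<sigma> :: "nat \<Rightarrow> real"
  assumes mono: "\<And>i j. i \<le> j \<Longrightarrow> j < r \<Longrightarrow> \<sigma> j \<le> \<sigma> i"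
    and nonneg: "\<And>i. \<sigma> i \<ge> 0" and supp: "\<And>i. r \<le> i \<Longrightarrow> \<sigma> i = 0"
    and "a \<noteq> b"
  shows "\<sigma> a * \<sigma> b \<le> \<sigma> 0 * \<sigma> 1"
proof -
  have ordered: "\<sigma> i * \<sigma> j \<le> \<sigma> 0 * \<sigma> 1" if "i < j" for i j
  proof (cases "j < r")
    case True
    with that have "\<sigma> i \<le> \<sigma> 0" and "\<sigma> j \<le> \<sigma> 1"
      using mono[of 0 i] mono[of 1 j] by simp_all
    then show ?thesis
      using nonneg by (simp add: mult_mono)
  next
    case False
    then show ?thesis
      using supp[of j] nonneg by simp
  qed
  show ?thesis
    using ordered[of a b] ordered[of b a] \<open>a \<noteq> b\<close> by (cases "a < b") (simp_all add: mult.commute)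
qed

theorem lemma6:
  fixes N1 N2 r :: nat and \<sigma> :: "nat \<Rightarrow> real"
  assumes mono: "\<And>i j. i \<le> j \<Longrightarrow> j < r \<Longrightarrow> \<sigma> j \<le> \<sigma> i"
    and pos: "\<And>i. i < r \<Longrightarrow> \<sigma> i > 0"
    and zero: "\<And>i. r \<le> i \<Longrightarrow> \<sigma> i = 0"
    and norm: "(\<Sum>i<r. (\<sigma> i)\<^sup>2) = 1"
    and r1: "r \<le> N1 - 1" and r2: "r \<le> N2 - 1"
  shows "(\<lambda>p q. complex_of_real (\<sigma> 0 * \<sigma> 1) * idm p q
           + (\<Sum>i<r. \<Sum>j<r. complex_of_real (\<sigma> i * \<sigma> j) * tensor (ketbra i j) (ketbra i j) p q))
         \<in> SEP N1 N2"
proof -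
  have nonneg: "\<sigma> i \<ge> 0" for i
    using pos[of i] zero[of i] by (cases "i < r") auto
  define c where "c a b = \<sigma> 0 * \<sigma> 1 - (if a \<noteq> b then \<sigma> a * \<sigma> b else 0)" for a b
  have "c a b \<ge> 0" for a b
    using prod_le_two_largest[where a = a and b = b, OF mono nonneg zero] nonneg[of 0] nonneg[of 1]
    unfolding c_def by auto
  then have "(\<lambda>p q. twirl (\<lambda>a. sqrt (\<sigma> a)) (2 * r\<^sup>2 + 1) p q
      + (if p = q then complex_of_real (c (fst p) (snd p)) else 0)) \<in> SEP N1 N2"
    by (intro SEP_add twirl_in_SEP SEP_diagonal)
  then show ?thesis
    by (rule SEP_eq_on[rotated], unfold eq_on_def)
      (simp only: sum_ketbra_tensor_entry twirl_sqrt_entry[OF nonneg zero less_add_one],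
        auto simp: idm_def c_def zero)
qed

end
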